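(* Let $\mathcal{A}\subset\mathcal{P}[n]$, let $G$ be the induced subgraph of $Q_n$ on vertex set $\mathcal{A}$, and let $i\in\{1,\dots,n\}$. Suppose $G$ has average degree at least $d$ and any two vertices of $G$ are at Hamming distance less than $k$. Then the induced subgraph $G'$ of $Q_n$ on vertex set $C_i(\mathcal{A})$ also has average degree at least $d$ and any two of its vertices are at Hamming distance less than $k$.
   Context: Vertices of $Q_n$ are identified with subsets of $[n]=\{1,\dots,n\}$ (elements of the power set $\mathcal{P}[n]$); two sets are adjacent iff their symmetric difference has size one, and the Hamming distance of $A,B$ is $|A\triangle B|$. For $A\in\mathcal{P}[n]$, $C_i(A)=A\setminus\{i\}$ if $i\in A$ and $C_i(A)=A$ if $i\notin A$. For $\mathcal{A}\subset\mathcal{P}[n]$, the down-compression is $C_i(\mathcal{A})=\{C_i(A):A\in\mathcal{A}\}\cup\{A\in\mathcal{A}:C_i(A)\in\mathcal{A}\}$. Average degree is $2|E|/|V|$. *)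

theory Defs
  imports Complex_Main
begin

text \<open>Vertices of Q_n are subsets of {1..n}; Hamming distance is the size of the symmetric difference.\<close>

definition hamming :: "nat set \<Rightarrow> nat set \<Rightarrow> nat" where
  "hamming A B = card ((A - B) \<union> (B - A))"

definition cube_edges :: "nat set set \<Rightarrow> nat set set set" where
  "cube_edges F = {{A, B} | A B. A \<in> F \<and> B \<in> F \<and> hamming A B = 1}"

text \<open>Average degree 2|E|/|V| (0 for the empty vertex set, by HOL's x/0 = 0).\<close>
definition avg_degree :: "nat set set \<Rightarrow> real" where
  "avg_degree F = 2 * real (card (cube_edges F)) / real (card F)"

definition comp_set :: "nat \<Rightarrow> nat set \<Rightarrow> nat set" where
  "comp_set i A = (if i \<in> A then A - {i} else A)"

definition down_comp :: "nat \<Rightarrow> nat set set \<Rightarrow> nat set set" where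
  "down_comp i F = {comp_set i A | A. A \<in> F} \<union> {A \<in> F. comp_set i A \<in> F}"

end

theory Submission
  imports Defs
begin

text \<open>The map X \<mapsto> (X if X \<in> \<A>, else X + i) is a bijection from C_i(\<A>) onto \<A>, so compression
  keeps the number of vertices. An edge of \<A> is lost only if it joins two sets A, B containing i
  with A - i \<notin> \<A>; then both A - i and B - i lie in C_i(\<A>) and span an edge there, which is not
  an edge of \<A>. Sending lost edges to these shifted copies injects the edges of \<A> into those of
  C_i(\<A>). For the distance bound, a new vertex X - i (with X \<in> \<A>) is at the same distance from
  an old vertex Y \<ni> i as X is from Y - i, and removing i from two sets never increases their
  distance.\<close>

lemma hamming_commute: "hamming A B = hamming B A"
  unfolding hamming_def by (simp add: Un_commute)

lemma hamming_Diff_singleton_le: "hamming (X - {i}) (Y - {i}) \<le> hamming X Y"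
proof -
  have "(X - {i} - (Y - {i})) \<union> (Y - {i} - (X - {i})) = ((X - Y) \<union> (Y - X)) - {i}"
    by auto
  then show ?thesis
    unfolding hamming_def by (simp add: card_Diff1_le)
qed

lemma hamming_Diff_singleton:
  assumes "i \<in> X" "i \<in> Y"
  shows "hamming (X - {i}) (Y - {i}) = hamming X Y"
proof -
  have "(X - {i} - (Y - {i})) \<union> (Y - {i} - (X - {i})) = (X - Y) \<union> (Y - X)"
    using assms by auto
  then show ?thesis
    unfolding hamming_def by simp
qed

lemma hamming_Diff_insert:
  assumes "i \<in> X" "i \<notin> Y"
  shows "hamming (X - {i}) (insert i Y) = hamming X Y"
proof -
  have "(X - {i} - insert i Y) \<union> (insert i Y - (X - {i})) = (X - Y) \<union> (Y - X)"
    using assms by auto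
  then show ?thesis
    unfolding hamming_def by simp
qed

lemma hamming_eq_1_Diff:
  assumes "hamming X Y = 1" "i \<in> X" "i \<notin> Y"
  shows "Y = X - {i}"
proof -
  obtain x where "(X - Y) \<union> (Y - X) = {x}"
    using assms(1) unfolding hamming_def by (rule card_1_singletonE)
  moreover have "i \<in> (X - Y) \<union> (Y - X)"
    using assms(2,3) by blast
  ultimately have "(X - Y) \<union> (Y - X) = {i}"
    by simp
  then show ?thesis
    using assms(2) by blast
qed

lemma cube_edges_subset: "e \<in> cube_edges F \<Longrightarrow> e \<subseteq> F"
  unfolding cube_edges_def by auto

lemma finite_cube_edges: "finite F \<Longrightarrow> finite (cube_edges F)"
  using cube_edges_subset by (blast intro: finite_subset[of _ "Pow F"])

lemma mem_down_comp_iff: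
  "X \<in> down_comp i F \<longleftrightarrow> X \<in> F \<and> (i \<in> X \<longrightarrow> X - {i} \<in> F) \<or> i \<notin> X \<and> insert i X \<in> F"
proof
  assume "X \<in> down_comp i F"
  then show "X \<in> F \<and> (i \<in> X \<longrightarrow> X - {i} \<in> F) \<or> i \<notin> X \<and> insert i X \<in> F"
    unfolding down_comp_def comp_set_def by (auto simp: insert_absorb split: if_splits)
next
  assume X: "X \<in> F \<and> (i \<in> X \<longrightarrow> X - {i} \<in> F) \<or> i \<notin> X \<and> insert i X \<in> F"
  show "X \<in> down_comp i F"
  proof (cases "i \<notin> X \<and> insert i X \<in> F")
    case True
    then have "X = comp_set i (insert i X)"
      unfolding comp_set_def by auto
    with True show ?thesis
      unfolding down_comp_def by blast
  next
    case False
    with X show ?thesis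
      unfolding down_comp_def comp_set_def by (cases "i \<in> X") auto
  qed
qed

lemma Diff_singleton_mem_down_comp: "X \<in> F \<Longrightarrow> X - {i} \<in> down_comp i F"
  by (cases "i \<in> X") (auto simp: mem_down_comp_iff insert_absorb)

lemma not_mem_down_comp:
  "X \<in> F \<Longrightarrow> X \<notin> down_comp i F \<Longrightarrow> i \<in> X \<and> X - {i} \<notin> F"
  by (auto simp: mem_down_comp_iff)

lemma finite_down_comp: "finite F \<Longrightarrow> finite (down_comp i F)"
  unfolding down_comp_def by simp

lemma card_down_comp:
  assumes "finite F"
  shows "card (down_comp i F) = card F"
proof -
  define lift where "lift X = (if X \<in> F then X else insert i X)" for X
  have "bij_betw lift (down_comp i F) F"
  proof (rule bij_betw_imageI)
    show "inj_on lift (down_comp i F)"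
      by (rule inj_onI) (auto simp: lift_def mem_down_comp_iff split: if_splits)
    show "lift ` down_comp i F = F"
    proof
      show "lift ` down_comp i F \<subseteq> F"
        by (auto simp: lift_def mem_down_comp_iff)
      show "F \<subseteq> lift ` down_comp i F"
      proof
        fix A assume A: "A \<in> F"
        show "A \<in> lift ` down_comp i F"
        proof (cases "A \<in> down_comp i F")
          case True
          with A show ?thesis
            by (auto simp: lift_def intro: rev_image_eqI)
        next
          case False
          with A have "i \<in> A" "A - {i} \<notin> F"
            using not_mem_down_comp by blast+
          then have "lift (A - {i}) = A"
            by (simp add: lift_def insert_absorb)
          then show ?thesis
            using Diff_singleton_mem_down_comp[OF A] by (metis imageI)
        qed
      qed
    qed
  qed
  then show ?thesis
    by (rule bij_betw_same_card)
qed

lemma mem_neighbour_of_removed: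
  assumes "P \<in> F" "P \<notin> down_comp i F" "Q \<in> F" "hamming P Q = 1"
  shows "i \<in> Q"
proof (rule ccontr)
  assume "i \<notin> Q"
  moreover have "i \<in> P" "P - {i} \<notin> F"
    using not_mem_down_comp[OF assms(1,2)] by auto
  ultimately show False
    using hamming_eq_1_Diff[OF assms(4)] assms(3) by auto
qed

lemma lost_cube_edge_down_comp:
  assumes "e \<in> cube_edges F" "e \<notin> cube_edges (down_comp i F)"
  shows "\<forall>X\<in>e. i \<in> X" "\<exists>X\<in>e. X - {i} \<notin> F"
    and "(\<lambda>X. X - {i}) ` e \<in> cube_edges (down_comp i F)"
proof -
  obtain A B where AB: "e = {A, B}" "A \<in> F" "B \<in> F" "hamming A B = 1"
    using assms(1) unfolding cube_edges_def by blast
  have "i \<in> A \<and> i \<in> B \<and> (A - {i} \<notin> F \<or> B - {i} \<notin> F)"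
  proof (cases "A \<in> down_comp i F")
    case True
    then have "B \<notin> down_comp i F"
      using assms(2) AB unfolding cube_edges_def by blast
    moreover have "hamming B A = 1"
      using AB(4) by (simp add: hamming_commute)
    ultimately show ?thesis
      using AB not_mem_down_comp mem_neighbour_of_removed[of B F i A] by blast
  next
    case False
    then show ?thesis
      using AB not_mem_down_comp mem_neighbour_of_removed[of A F i B] by blast
  qed
  then show i_mem: "\<forall>X\<in>e. i \<in> X" and "\<exists>X\<in>e. X - {i} \<notin> F"
    using AB by auto
  have "hamming (A - {i}) (B - {i}) = 1"
    using AB i_mem hamming_Diff_singleton by simp
  moreover have "A - {i} \<in> down_comp i F" "B - {i} \<in> down_comp i F"
    using AB(2,3) by (simp_all add: Diff_singleton_mem_down_comp)
  moreover have "(\<lambda>X. X - {i}) ` e = {A - {i}, B - {i}}"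
    using AB(1) by simp
  ultimately show "(\<lambda>X. X - {i}) ` e \<in> cube_edges (down_comp i F)"
    unfolding cube_edges_def by blast
qed

lemma card_cube_edges_le_down_comp:
  assumes "finite F"
  shows "card (cube_edges F) \<le> card (cube_edges (down_comp i F))"
proof -
  let ?E = "cube_edges (down_comp i F)"
  define shift where "shift e = (if e \<in> ?E then e else (\<lambda>X. X - {i}) ` e)" for e
  have shifted_is_new: "(\<lambda>X. X - {i}) ` e \<notin> cube_edges F"
    if "e \<in> cube_edges F" "e \<notin> ?E" for e
    using lost_cube_edge_down_comp(2)[OF that] cube_edges_subset by blast
  have inj_remove: "inj_on (\<lambda>X. X - {i}) {X. i \<in> X}"
    by (rule inj_onI) (metis insert_Diff mem_Collect_eq)
  have "inj_on shift (cube_edges F)"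
  proof (rule inj_onI)
    fix e f assume e: "e \<in> cube_edges F" and f: "f \<in> cube_edges F" and eq: "shift e = shift f"
    consider "e \<in> ?E" "f \<in> ?E" | "(e \<in> ?E) \<noteq> (f \<in> ?E)" | "e \<notin> ?E" "f \<notin> ?E"
      by blast
    then show "e = f"
    proof cases
      case 1
      with eq show ?thesis by (simp add: shift_def)
    next
      case 2
      with e f eq shifted_is_new show ?thesis
        by (auto simp: shift_def split: if_splits)
    next
      case 3
      then have "e \<subseteq> {X. i \<in> X}" "f \<subseteq> {X. i \<in> X}"
        using lost_cube_edge_down_comp(1) e f by blast+
      with 3 eq show ?thesis
        by (simp add: shift_def inj_on_image_eq_iff[OF inj_remove])
    qed
  qed
  moreover have "shift ` cube_edges F \<subseteq> ?E"
    using lost_cube_edge_down_comp(3) by (auto simp: shift_def)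
  ultimately show ?thesis
    using card_inj_on_le finite_cube_edges finite_down_comp assms by metis
qed

lemma avg_degree_le_down_comp:
  "finite F \<Longrightarrow> avg_degree F \<le> avg_degree (down_comp i F)"
  unfolding avg_degree_def card_down_comp
  by (intro divide_right_mono) (simp_all add: card_cube_edges_le_down_comp)

lemma hamming_down_comp_lt:
  assumes "\<forall>A\<in>F. \<forall>B\<in>F. hamming A B < k"
    and "X \<in> down_comp i F" "Y \<in> down_comp i F"
  shows "hamming X Y < k"
proof -
  have one_side: "hamming X Y < k"
    if X: "X \<in> down_comp i F" and Y: "Y \<in> down_comp i F" and "i \<in> X" for X Y
  proof -
    have "X \<in> F" "X - {i} \<in> F"
      using X \<open>i \<in> X\<close> by (auto simp: mem_down_comp_iff)
    show ?thesis
    proof (cases "Y \<in> F")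
      case True
      with \<open>X \<in> F\<close> assms(1) show ?thesis by blast
    next
      case False
      with Y have "i \<notin> Y" "insert i Y \<in> F"
        by (auto simp: mem_down_comp_iff)
      with \<open>X - {i} \<in> F\<close> assms(1) show ?thesis
        using hamming_Diff_insert[OF \<open>i \<in> X\<close>] by force
    qed
  qed
  show ?thesis
  proof (cases "i \<in> X \<or> i \<in> Y")
    case True
    then show ?thesis
      using one_side[of X Y] one_side[of Y X] assms(2,3) by (auto simp: hamming_commute)
  next
    case False
    have "\<exists>X'\<in>F. Z = X' - {i}" if Z: "Z \<in> down_comp i F" "i \<notin> Z" for Z
    proof (cases "Z \<in> F")
      case True
      with Z show ?thesis by (intro bexI[of _ Z]) auto
    next
      case False
      with Z have "insert i Z \<in> F" by (auto simp: mem_down_comp_iff)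
      with Z show ?thesis by (intro bexI[of _ "insert i Z"]) auto
    qed
    then obtain X' Y' where "X' \<in> F" "Y' \<in> F" "X = X' - {i}" "Y = Y' - {i}"
      using assms(2,3) False by meson
    then show ?thesis
      using assms(1) hamming_Diff_singleton_le[of X' i Y'] by fastforce
  qed
qed

theorem lemma6:
  fixes n i k :: nat and d :: real and \<A> :: "nat set set"
  assumes "\<A> \<subseteq> Pow {1..n}"
    and "i \<in> {1..n}"
    and "avg_degree \<A> \<ge> d"
    and "\<forall>A\<in>\<A>. \<forall>B\<in>\<A>. hamming A B < k"
  shows "avg_degree (down_comp i \<A>) \<ge> d \<and> (\<forall>A\<in>down_comp i \<A>. \<forall>B\<in>down_comp i \<A>. hamming A B < k)"
proof
  have "finite \<A>"
    using assms(1) finite_subset by blast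
  then show "avg_degree (down_comp i \<A>) \<ge> d"
    using assms(3) avg_degree_le_down_comp order_trans by blast
  show "\<forall>A\<in>down_comp i \<A>. \<forall>B\<in>down_comp i \<A>. hamming A B < k"
    using assms(4) hamming_down_comp_lt by blast
qed

end
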